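(* Let $\alpha_1,\beta_1,\alpha_2,\beta_2\in(0,1)$ with $\lambda_i:=1-\alpha_i-\beta_i\le 0$ for $i=1,2$. Let $w_1,w_2\ge 0$, $\Gamma_1,\Gamma_2\in(0,1]$, and MPR success probabilities $p_{1/1},p_{2/2},p_{1/1,2},p_{2/2,1}\in[0,1]$. For policies $\mathbf a_k=(a_{k,0},a_{k,1},a_{k,2})$, $k=1,2$, define $$E(\mathbf a_1,\mathbf a_2)=w_1E_1\big(q_1(\mathbf a_1,\mathbf a_2)\big)+w_2E_2\big(q_2(\mathbf a_1,\mathbf a_2)\big).$$ Then the minimum of $E$ over $\mathcal F_\Gamma=\mathcal P_1(\Gamma_1)\times\mathcal P_2(\Gamma_2)$ exists and at least one global minimizer is a pair of vertices, i.e. $$\min_{(\mathbf a_1,\mathbf a_2)\in\mathcal F_\Gamma}E(\mathbf a_1,\mathbf a_2)=\min_{\mathbf v_1\in\mathcal V_1,\ \mathbf v_2\in\mathcal V_2}E(\mathbf v_1,\mathbf v_2),$$ where $\mathcal V_k=\{(1,0,0),\,(1-\Gamma_k,\Gamma_k,0),\,(1-\Gamma_k,0,\Gamma_k)\}$. In particular, a global optimum is found among nine candidate policy pairs.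
   Context: For $i\in\{1,2\}$ and $q\in[0,1]$, the (steady-state reconstruction error) function is $$E_i(q)=\frac{2\alpha_i\beta_i(1-q)}{(\alpha_i+\beta_i)\big[(\alpha_i+\beta_i)-q(\alpha_i+\beta_i-1)\big]}=\frac{2\alpha_i\beta_i(1-q)}{(1-\lambda_i)(1-\lambda_i(1-q))}.$$ The effective update probabilities are, for $i\in\{1,2\}$ and $j$ the other index ($j=1+(i\bmod 2)$), $$q_i(\mathbf a_1,\mathbf a_2)=a_{1,i}a_{2,0}\,p_{1/1}+a_{1,0}a_{2,i}\,p_{2/2}+a_{1,i}a_{2,i}\big[1-(1-p_{1/1,2})(1-p_{2/2,1})\big]+a_{1,i}a_{2,j}\,p_{1/1,2}+a_{1,j}a_{2,i}\,p_{2/2,1}.$$ The feasible policy set of sensor $k$ is $\mathcal P_k(\Gamma_k)=\{\mathbf a_k\in\mathbb R_{\ge0}^3:\ a_{k,0}+a_{k,1}+a_{k,2}=1,\ a_{k,1}+a_{k,2}\le\Gamma_k\}$ (here $a_{k,0}$ is the probability of staying silent and $a_{k,i}$ the probability of sampling and transmitting source $i$ in a slot). *)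

theory Defs
  imports "HOL-Analysis.Analysis"
begin

text \<open>Steady-state reconstruction error of source i with parameters alpha, beta
  and effective update probability q.\<close>
definition Err :: "real \<Rightarrow> real \<Rightarrow> real \<Rightarrow> real" where
  "Err \<alpha> \<beta> q = 2 * \<alpha> * \<beta> * (1 - q) /
      ((\<alpha> + \<beta>) * ((\<alpha> + \<beta>) - q * (\<alpha> + \<beta> - 1)))"

text \<open>A policy is a triple (a0, a1, a2): silent, sample source 1, sample source 2.\<close>
type_synonym policy = "real \<times> real \<times> real"

definition pol0 :: "policy \<Rightarrow> real" where "pol0 a = fst a"
definition pol1 :: "policy \<Rightarrow> real" where "pol1 a = fst (snd a)"
definition pol2 :: "policy \<Rightarrow> real" where "pol2 a = snd (snd a)"

definition polc :: "policy \<Rightarrow> nat \<Rightarrow> real" where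
  "polc a i = (if i = 1 then pol1 a else pol2 a)"

text \<open>Effective update probability of source i (i = 1 or 2; j is the other index).
  Parameters: p11 = p_{1/1}, p22 = p_{2/2}, p112 = p_{1/1,2}, p221 = p_{2/2,1}.\<close>
definition qeff :: "real \<Rightarrow> real \<Rightarrow> real \<Rightarrow> real \<Rightarrow> nat \<Rightarrow> policy \<Rightarrow> policy \<Rightarrow> real" where
  "qeff p11 p22 p112 p221 i a1 a2 =
     (let j = 1 + (i mod 2) in
       polc a1 i * pol0 a2 * p11 + pol0 a1 * polc a2 i * p22
       + polc a1 i * polc a2 i * (1 - (1 - p112) * (1 - p221))
       + polc a1 i * polc a2 j * p112 + polc a1 j * polc a2 i * p221)"

definition feasible :: "real \<Rightarrow> policy set" where
  "feasible \<Gamma> = {a. pol0 a \<ge> 0 \<and> pol1 a \<ge> 0 \<and> pol2 a \<ge> 0 \<and>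
                     pol0 a + pol1 a + pol2 a = 1 \<and> pol1 a + pol2 a \<le> \<Gamma>}"

definition vertices :: "real \<Rightarrow> policy set" where
  "vertices \<Gamma> = {(1, 0, 0), (1 - \<Gamma>, \<Gamma>, 0), (1 - \<Gamma>, 0, \<Gamma>)}"

definition totalE ::
  "real \<Rightarrow> real \<Rightarrow> real \<Rightarrow> real \<Rightarrow> real \<Rightarrow> real \<Rightarrow> real \<Rightarrow> real \<Rightarrow> real \<Rightarrow> real
   \<Rightarrow> policy \<Rightarrow> policy \<Rightarrow> real" where
  "totalE \<alpha>1 \<beta>1 \<alpha>2 \<beta>2 w1 w2 p11 p22 p112 p221 a1 a2 =
     w1 * Err \<alpha>1 \<beta>1 (qeff p11 p22 p112 p221 1 a1 a2)
   + w2 * Err \<alpha>2 \<beta>2 (qeff p11 p22 p112 p221 2 a1 a2)"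

end

theory Submission
  imports Defs
begin

text \<open>When \<open>\<alpha> + \<beta> \<ge> 1\<close> the error \<open>Err \<alpha> \<beta>\<close> is concave in the update probability on
  \<open>q \<le> 1\<close>, and each effective update probability is bilinear in the two policies. Hence
  the total error is concave in the policy of either sensor when the other one is fixed.
  The feasible set of a sensor is the triangle spanned by its three vertex policies, and a
  concave function on a polytope is minimised at a vertex. Moving first sensor 1 and then
  sensor 2 to a suitable vertex never increases the error, so the best of the nine vertex
  pairs is a global minimiser.\<close>

lemma concave_on_compose_linear:
  assumes "concave_on T f" "linear g" "convex S" "g ` S \<subseteq> T"
  shows "concave_on S (\<lambda>x. f (g x))"
  using assms unfolding concave_on_iff
  by (auto simp: linear_add linear_scale image_subset_iff)

lemma concave_on_convex_hull_min:
  fixes f :: "'a::real_vector \<Rightarrow> real"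
  assumes "finite S" "concave_on (convex hull S) f" "x \<in> convex hull S"
  shows "\<exists>v\<in>S. f v \<le> f x"
proof -
  have "S \<noteq> {}" using assms(3) by auto
  then obtain v where "v \<in> S" and v_min: "\<forall>u\<in>S. f v \<le> f u"
    using ex_is_arg_min_if_finite[OF assms(1), of f] by (auto simp: is_arg_min_linorder)
  have "\<forall>y\<in>convex hull S. - f y \<le> - f v"
    using assms(2) v_min unfolding concave_on_def by (intro convex_on_convex_hull_bound) auto
  then show ?thesis using \<open>v \<in> S\<close> assms(3) by force
qed

lemma concave_on_Err:
  assumes "0 < a" "0 < b" "1 \<le> a + b"
  shows "concave_on {..1} (Err a b)"
proof -
  define s where "s = a + b"
  define c where "c = 2 * a * b / s"
  define D where "D q = s - q * (s - 1)" for q :: real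
  have "s \<ge> 1" "c > 0" using assms by (simp_all add: s_def c_def)
  have D_ge_1: "D q \<ge> 1" if "q \<le> 1" for q
  proof -
    have "0 \<le> (1 - q) * (s - 1)" using that \<open>s \<ge> 1\<close> by simp
    then show ?thesis by (simp add: D_def algebra_simps)
  qed
  have D_deriv: "(D has_real_derivative 1 - s) (at q)" for q
    unfolding D_def by (auto intro!: derivative_eq_intros)
  have Err_eq: "Err a b = (\<lambda>q. c * (1 - q) / D q)"
    by (simp add: Err_def D_def s_def c_def fun_eq_iff)
  show ?thesis
    unfolding Err_eq
  proof (rule f''_le0_imp_concave)
    fix q :: real assume "q \<in> {..1}"
    then have "D q \<ge> 1" by (simp add: D_ge_1)
    then show "((\<lambda>q. c * (1 - q) / D q) has_real_derivative - c / D q ^ 2) (at q)"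
      by (auto intro!: derivative_eq_intros D_deriv) (simp add: D_def field_simps power2_eq_square)
    show "((\<lambda>q. - c / D q ^ 2) has_real_derivative - 2 * c * (s - 1) / D q ^ 3) (at q)"
      using \<open>D q \<ge> 1\<close>
      by (auto intro!: derivative_eq_intros D_deriv) (simp add: field_simps eval_nat_numeral)
    show "- 2 * c * (s - 1) / D q ^ 3 \<le> 0"
      using \<open>D q \<ge> 1\<close> \<open>s \<ge> 1\<close> \<open>c > 0\<close> by (simp add: divide_nonpos_pos)
  qed simp
qed

lemma concave_on_weighted_Err:
  assumes "0 < \<alpha>1" "0 < \<beta>1" "1 \<le> \<alpha>1 + \<beta>1" "0 < \<alpha>2" "0 < \<beta>2" "1 \<le> \<alpha>2 + \<beta>2"
    and "0 \<le> w1" "0 \<le> w2"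
    and "linear q1" "linear q2" "convex S" "\<forall>x\<in>S. q1 x \<le> 1" "\<forall>x\<in>S. q2 x \<le> 1"
  shows "concave_on S (\<lambda>x. w1 * Err \<alpha>1 \<beta>1 (q1 x) + w2 * Err \<alpha>2 \<beta>2 (q2 x))"
proof -
  have "concave_on S (\<lambda>x. Err \<alpha>1 \<beta>1 (q1 x))"
    by (rule concave_on_compose_linear[OF concave_on_Err]) (use assms in auto)
  moreover have "concave_on S (\<lambda>x. Err \<alpha>2 \<beta>2 (q2 x))"
    by (rule concave_on_compose_linear[OF concave_on_Err]) (use assms in auto)
  ultimately show ?thesis
    using assms(7,8) by (intro concave_on_add concave_on_cmul)
qed

lemma bilinear_qeff: "bilinear (qeff p11 p22 p112 p221 i)"
  unfolding bilinear_def linear_iff qeff_def polc_def pol0_def pol1_def pol2_def Let_def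
  by (simp add: algebra_simps)

lemma cross_products_le_1:
  fixes x0 x1 x2 y0 y1 y2 c1 c2 c3 c4 c5 :: real
  assumes "0 \<le> x0" "0 \<le> x1" "0 \<le> x2" "x0 + x1 + x2 = 1"
    and "0 \<le> y0" "0 \<le> y1" "0 \<le> y2" "y0 + y1 + y2 = 1"
    and "c1 \<le> 1" "c2 \<le> 1" "c3 \<le> 1" "c4 \<le> 1" "c5 \<le> 1"
  shows "x1 * y0 * c1 + x0 * y1 * c2 + x1 * y1 * c3 + x1 * y2 * c4 + x2 * y1 * c5 \<le> 1"
proof -
  have le: "x * y * c \<le> x * y" if "0 \<le> x" "0 \<le> y" "c \<le> 1" for x y c :: real
    using that by (simp add: mult_left_le)
  have "x1 * y0 * c1 + x0 * y1 * c2 + x1 * y1 * c3 + x1 * y2 * c4 + x2 * y1 * c5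
      \<le> x1 * y0 + x0 * y1 + x1 * y1 + x1 * y2 + x2 * y1"
    using assms by (intro add_mono le) auto
  also have "\<dots> \<le> x1 * y0 + x0 * y1 + x1 * y1 + x1 * y2 + x2 * y1
      + (x0 * y0 + x0 * y2 + x2 * y0 + x2 * y2)"
    using assms by simp
  also have "\<dots> = (x0 + x1 + x2) * (y0 + y1 + y2)"
    by (simp add: algebra_simps)
  finally show ?thesis using assms by simp
qed

lemma qeff_le_1:
  assumes "p11 \<le> 1" "p22 \<le> 1" "p112 \<le> 1" "p221 \<le> 1"
    and "a1 \<in> feasible G1" "a2 \<in> feasible G2" "i \<in> {1, 2}"
  shows "qeff p11 p22 p112 p221 i a1 a2 \<le> 1"
proof -
  obtain x0 x1 x2 y0 y1 y2 where a: "a1 = (x0, x1, x2)" "a2 = (y0, y1, y2)"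
    by (cases a1, cases a2) auto
  have "1 - (1 - p112) * (1 - p221) \<le> 1"
    using assms(3,4) by simp
  then show ?thesis
    using assms unfolding a feasible_def qeff_def polc_def pol0_def pol1_def pol2_def
    \<comment> \<open>for source 2, components 1 and 2 of both policies swap roles\<close>
    by (auto intro: cross_products_le_1[of x0 x1 x2 y0 y1 y2]
                    cross_products_le_1[of x0 x2 x1 y0 y2 y1])
qed

lemma feasible_eq_convex_hull:
  assumes "0 < G" "G \<le> 1"
  shows "feasible G = convex hull vertices G"
proof
  show "feasible G \<subseteq> convex hull vertices G"
  proof
    fix x assume "x \<in> feasible G"
    then obtain x1 x2 where x: "x = (1 - x1 - x2, x1, x2)" "0 \<le> x1" "0 \<le> x2" "x1 + x2 \<le> G"
      unfolding feasible_def pol0_def pol1_def pol2_def by (cases x) auto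
    have "x1 / G + x2 / G \<le> 1"
      using x(4) assms(1) by (simp flip: add_divide_distrib)
    moreover have "x = (1 - x1 / G - x2 / G) *\<^sub>R (1, 0, 0) + (x1 / G) *\<^sub>R (1 - G, G, 0)
        + (x2 / G) *\<^sub>R (1 - G, 0, G)"
      using assms(1) by (simp add: x field_simps)
    ultimately show "x \<in> convex hull vertices G"
      unfolding vertices_def convex_hull_3 using x(2,3) assms(1)
      by (intro CollectI exI[of _ "1 - x1 / G - x2 / G"] exI[of _ "x1 / G"] exI[of _ "x2 / G"]) auto
  qed
  show "convex hull vertices G \<subseteq> feasible G"
  proof
    fix x assume "x \<in> convex hull vertices G"
    then obtain u v w where "0 \<le> u" "0 \<le> v" "0 \<le> w" "u + v + w = 1"
      and x: "x = u *\<^sub>R (1, 0, 0) + v *\<^sub>R (1 - G, G, 0) + w *\<^sub>R (1 - G, 0, G)"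
      unfolding vertices_def convex_hull_3 by auto
    moreover have "v * G + w * G \<le> G"
      using calculation assms by (simp flip: distrib_right add: mult_left_le_one_le)
    ultimately show "x \<in> feasible G"
      using assms unfolding feasible_def pol0_def pol1_def pol2_def by (auto simp: algebra_simps)
  qed
qed

lemma concave_on_feasible_vertex_le:
  assumes "0 < G" "G \<le> 1" "concave_on (feasible G) f" "x \<in> feasible G"
  shows "\<exists>v\<in>vertices G. f v \<le> f x"
  using concave_on_convex_hull_min[of "vertices G" f x] assms
  by (simp add: feasible_eq_convex_hull vertices_def)

lemma concave_on_totalE:
  assumes "0 < \<alpha>1" "0 < \<beta>1" "1 \<le> \<alpha>1 + \<beta>1" "0 < \<alpha>2" "0 < \<beta>2" "1 \<le> \<alpha>2 + \<beta>2"
    and "0 \<le> w1" "0 \<le> w2" "p11 \<le> 1" "p22 \<le> 1" "p112 \<le> 1" "p221 \<le> 1"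
    and "0 < \<Gamma>1" "\<Gamma>1 \<le> 1" "0 < \<Gamma>2" "\<Gamma>2 \<le> 1"
  shows "a2 \<in> feasible \<Gamma>2 \<Longrightarrow>
           concave_on (feasible \<Gamma>1) (\<lambda>a1. totalE \<alpha>1 \<beta>1 \<alpha>2 \<beta>2 w1 w2 p11 p22 p112 p221 a1 a2)"
    and "a1 \<in> feasible \<Gamma>1 \<Longrightarrow>
           concave_on (feasible \<Gamma>2) (\<lambda>a2. totalE \<alpha>1 \<beta>1 \<alpha>2 \<beta>2 w1 w2 p11 p22 p112 p221 a1 a2)"
proof -
  note linear_qeff = bilinear_qeff[unfolded bilinear_def, THEN conjunct1, rule_format]
    bilinear_qeff[unfolded bilinear_def, THEN conjunct2, rule_format]
  have q_le_1: "qeff p11 p22 p112 p221 i a1 a2 \<le> 1"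
    if "a1 \<in> feasible \<Gamma>1" "a2 \<in> feasible \<Gamma>2" "i \<in> {1, 2}" for i a1 a2
    using qeff_le_1 assms(9-12) that by blast
  show "concave_on (feasible \<Gamma>1) (\<lambda>a1. totalE \<alpha>1 \<beta>1 \<alpha>2 \<beta>2 w1 w2 p11 p22 p112 p221 a1 a2)"
    if "a2 \<in> feasible \<Gamma>2"
    unfolding totalE_def using assms(1-8,13,14) that
    by (intro concave_on_weighted_Err linear_qeff) (auto simp: q_le_1 feasible_eq_convex_hull)
  show "concave_on (feasible \<Gamma>2) (\<lambda>a2. totalE \<alpha>1 \<beta>1 \<alpha>2 \<beta>2 w1 w2 p11 p22 p112 p221 a1 a2)"
    if "a1 \<in> feasible \<Gamma>1"
    unfolding totalE_def using assms(1-8,15,16) that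
    by (intro concave_on_weighted_Err linear_qeff) (auto simp: q_le_1 feasible_eq_convex_hull)
qed

theorem theorem1:
  fixes \<alpha>1 \<beta>1 \<alpha>2 \<beta>2 w1 w2 \<Gamma>1 \<Gamma>2 p11 p22 p112 p221 :: real
  assumes "0 < \<alpha>1" "\<alpha>1 < 1" "0 < \<beta>1" "\<beta>1 < 1"
      and "0 < \<alpha>2" "\<alpha>2 < 1" "0 < \<beta>2" "\<beta>2 < 1"
      and "1 - \<alpha>1 - \<beta>1 \<le> 0" "1 - \<alpha>2 - \<beta>2 \<le> 0"
      and "0 \<le> w1" "0 \<le> w2"
      and "0 < \<Gamma>1" "\<Gamma>1 \<le> 1" "0 < \<Gamma>2" "\<Gamma>2 \<le> 1"
      and "0 \<le> p11" "p11 \<le> 1" "0 \<le> p22" "p22 \<le> 1"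
      and "0 \<le> p112" "p112 \<le> 1" "0 \<le> p221" "p221 \<le> 1"
  shows "\<exists>v1\<in>vertices \<Gamma>1. \<exists>v2\<in>vertices \<Gamma>2.
           (v1, v2) \<in> feasible \<Gamma>1 \<times> feasible \<Gamma>2 \<and>
           (\<forall>(a1, a2) \<in> feasible \<Gamma>1 \<times> feasible \<Gamma>2.
              totalE \<alpha>1 \<beta>1 \<alpha>2 \<beta>2 w1 w2 p11 p22 p112 p221 v1 v2
              \<le> totalE \<alpha>1 \<beta>1 \<alpha>2 \<beta>2 w1 w2 p11 p22 p112 p221 a1 a2)"
proof -
  let ?T = "totalE \<alpha>1 \<beta>1 \<alpha>2 \<beta>2 w1 w2 p11 p22 p112 p221"
  have vertices_feasible: "vertices \<Gamma>1 \<subseteq> feasible \<Gamma>1" "vertices \<Gamma>2 \<subseteq> feasible \<Gamma>2"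
    using assms(13-16) by (simp_all add: feasible_eq_convex_hull hull_subset)
  have "1 \<le> \<alpha>1 + \<beta>1" "1 \<le> \<alpha>2 + \<beta>2"
    using assms(9,10) by simp_all
  note concave = concave_on_totalE[OF assms(1,3) this(1) assms(5,7) this(2) assms(11,12)
      assms(18,20,22,24) assms(13-16)]
  have vertex_pair_le: "\<exists>u1\<in>vertices \<Gamma>1. \<exists>u2\<in>vertices \<Gamma>2. ?T u1 u2 \<le> ?T a1 a2"
    if a1: "a1 \<in> feasible \<Gamma>1" and a2: "a2 \<in> feasible \<Gamma>2" for a1 a2
  proof -
    obtain u1 where "u1 \<in> vertices \<Gamma>1" "?T u1 a2 \<le> ?T a1 a2"
      using concave_on_feasible_vertex_le[OF assms(13,14) concave(1)[OF a2] a1] by blast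
    moreover obtain u2 where "u2 \<in> vertices \<Gamma>2" "?T u1 u2 \<le> ?T u1 a2"
      using concave_on_feasible_vertex_le[OF assms(15,16) concave(2) a2] calculation(1)
        vertices_feasible by blast
    ultimately show ?thesis by (blast intro: order_trans)
  qed
  have "finite (vertices \<Gamma>1 \<times> vertices \<Gamma>2)" "vertices \<Gamma>1 \<times> vertices \<Gamma>2 \<noteq> {}"
    by (simp_all add: vertices_def)
  then obtain v where "is_arg_min (case_prod ?T) (\<lambda>v. v \<in> vertices \<Gamma>1 \<times> vertices \<Gamma>2) v"
    using ex_is_arg_min_if_finite by blast
  then obtain v1 v2 where v: "v1 \<in> vertices \<Gamma>1" "v2 \<in> vertices \<Gamma>2"
    and v_min: "\<And>u1 u2. u1 \<in> vertices \<Gamma>1 \<Longrightarrow> u2 \<in> vertices \<Gamma>2 \<Longrightarrow> ?T v1 v2 \<le> ?T u1 u2"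
    unfolding is_arg_min_linorder by (cases v) auto
  have "?T v1 v2 \<le> ?T a1 a2" if "a1 \<in> feasible \<Gamma>1" "a2 \<in> feasible \<Gamma>2" for a1 a2
    using vertex_pair_le[OF that] v_min by (blast intro: order_trans)
  then show ?thesis
    using v vertices_feasible by blast
qed

end
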